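(* Let $\bm{a}=(\alpha_1,\dots,\alpha_m)$ be a basis vector of $\mathbb{F}_{q^m}$ over $\mathbb{F}_q$ and let $\varphi$ be an $\mathbb{F}_q$-linear automorphism of $\mathbb{F}_{q^m}$. Let $A$ be the $m\times m$ matrix over $\mathbb{F}_{q^m}$ whose $i$-th row is $\varphi(\alpha_i\bm{a})=(\varphi(\alpha_i\alpha_1),\dots,\varphi(\alpha_i\alpha_m))$. Then $\varphi$ is fully linear over $\mathbb{F}_{q^m}$ if and only if $A$ has rank $1$ over $\mathbb{F}_{q^m}$.
   Context: $q$ is a prime power (the paper takes $q$ a power of $2$). A basis vector of $\mathbb{F}_{q^m}$ over $\mathbb{F}_q$ is a vector in $\mathbb{F}_{q^m}^m$ whose components form an $\mathbb{F}_q$-basis of $\mathbb{F}_{q^m}$. An $\mathbb{F}_q$-linear automorphism of $\mathbb{F}_{q^m}$ is a bijective $\mathbb{F}_q$-linear map $\varphi:\mathbb{F}_{q^m}\to\mathbb{F}_{q^m}$, applied componentwise to vectors; for a set $\mathcal{V}\subseteq\mathbb{F}_{q^m}^n$, $\varphi(\mathcal{V})=\{\varphi(\bm{v}):\bm{v}\in\mathcal{V}\}$. For an $\mathbb{F}_{q^m}$-linear code $\mathcal{C}\subseteq\mathbb{F}_{q^m}^n$, $\varphi$ is called linear on $\mathcal{C}$ if $\varphi(\mathcal{C})$ is an $\mathbb{F}_{q^m}$-linear subspace of $\mathbb{F}_{q^m}^n$. $\varphi$ is called fully linear over $\mathbb{F}_{q^m}$ if it is linear on every $\mathbb{F}_{q^m}$-linear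 code $\mathcal{C}\subseteq\mathbb{F}_{q^m}^n$, for every length $n\ge1$. *)

theory Defs
  imports "Jordan_Normal_Form.DL_Rank"
begin

text \<open>The ambient finite field F_{q^m} is a finite field type 'a; F_q is a subfield K of it.\<close>

definition is_subfield :: "'a::field set \<Rightarrow> bool" where
  "is_subfield K \<longleftrightarrow> 0 \<in> K \<and> 1 \<in> K \<and>
     (\<forall>x\<in>K. \<forall>y\<in>K. x + y \<in> K \<and> x * y \<in> K) \<and>
     (\<forall>x\<in>K. - x \<in> K \<and> inverse x \<in> K)"

definition is_basis_vector :: "'a::field set \<Rightarrow> nat \<Rightarrow> (nat \<Rightarrow> 'a) \<Rightarrow> bool" where
  "is_basis_vector K m a \<longleftrightarrow>
     (\<forall>c. (\<forall>i<m. c i \<in> K) \<and> (\<Sum>i<m. c i * a i) = 0 \<longrightarrow> (\<forall>i<m. c i = 0)) \<and>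
     (\<forall>x. \<exists>c. (\<forall>i<m. c i \<in> K) \<and> x = (\<Sum>i<m. c i * a i))"

definition is_linear_automorphism :: "'a::field set \<Rightarrow> ('a \<Rightarrow> 'a) \<Rightarrow> bool" where
  "is_linear_automorphism K \<phi> \<longleftrightarrow> bij \<phi> \<and>
     (\<forall>x y. \<phi> (x + y) = \<phi> x + \<phi> y) \<and>
     (\<forall>c\<in>K. \<forall>x. \<phi> (c * x) = c * \<phi> x)"

definition is_linear_code :: "nat \<Rightarrow> 'a::field list set \<Rightarrow> bool" where
  "is_linear_code n C \<longleftrightarrow> C \<subseteq> {v. length v = n} \<and> replicate n 0 \<in> C \<and>
     (\<forall>u\<in>C. \<forall>v\<in>C. map2 (+) u v \<in> C) \<and>
     (\<forall>c. \<forall>v\<in>C. map (\<lambda>x. c * x) v \<in> C)"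

definition fully_linear :: "('a::field \<Rightarrow> 'a) \<Rightarrow> bool" where
  "fully_linear \<phi> \<longleftrightarrow>
     (\<forall>n\<ge>1. \<forall>C. is_linear_code n C \<longrightarrow> is_linear_code n (map \<phi> ` C))"

end

theory Submission
  imports Defs
begin

text \<open>Fully linear maps are exactly the additive bijections \<phi> for which x \<mapsto> \<phi> x / \<phi> 1
  is multiplicative: applying \<phi> to the line through (1, y) forces this, and conversely such a
  \<phi> turns multiplication by d into multiplication by \<phi> d / \<phi> 1, so it maps subspaces to
  subspaces. For such \<phi> the matrix (\<phi> (a i * a j)) has entries \<phi> (a i) * \<phi> (a j) / \<phi> 1 and a
  nonzero diagonal, hence rank 1. Conversely a rank-1 factorisation \<phi> (a i * a j) = f i * g j
  extends K-bilinearly to \<phi> (x * y) = U x * W y, and this alone gives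
  \<phi> (x * y) * \<phi> 1 = U x * W 1 * U 1 * W y = \<phi> x * \<phi> y.\<close>

definition scaled_multiplicative :: "('a::field \<Rightarrow> 'a) \<Rightarrow> bool" where
  "scaled_multiplicative \<phi> \<longleftrightarrow> (\<forall>x y. \<phi> (x * y) * \<phi> 1 = \<phi> x * \<phi> y)"

lemma (in vec_space) lin_indpt_singleton:
  assumes w: "w \<in> carrier_vec n" "w \<noteq> 0\<^sub>v n"
  shows "lin_indpt {w}"
proof (rule finite_lin_indpt2)
  fix c assume "lincomb c {w} = 0\<^sub>v n"
  then have zero: "c w \<cdot>\<^sub>v w = 0\<^sub>v n" using w(1) by (simp add: lincomb_def)
  obtain i where i: "i < n" "w $ i \<noteq> 0" using w by (metis eq_vecI carrier_vecD index_zero_vec)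
  have "c w * w $ i = (c w \<cdot>\<^sub>v w) $ i" using i w(1) by simp
  also have "\<dots> = 0" using zero i by simp
  finally show "\<forall>v\<in>{w}. c v = 0" using i by simp
qed (use w in auto)

lemma (in vec_space) col_nonzero_if_entry_nonzero:
  assumes "A \<in> carrier_mat n nc" "i < n" "j < nc" "A $$ (i, j) \<noteq> 0"
  shows "col A j \<noteq> 0\<^sub>v n"
proof
  assume "col A j = 0\<^sub>v n"
  then have "col A j $ i = 0" using assms(2) by simp
  then show False using assms by simp
qed

lemma (in vec_space) rank_pos_if_nonzero_entry:
  assumes A: "A \<in> carrier_mat n nc" and "i < n" "j < nc" "A $$ (i, j) \<noteq> 0"
  shows "rank A \<ge> 1"
proof -
  have "col A j \<in> carrier_vec n" "col A j \<in> set (cols A)" "col A j \<noteq> 0\<^sub>v n"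
    using assms col_nonzero_if_entry_nonzero by (auto simp: cols_def)
  then show ?thesis using rank_ge_card_indpt[OF A, of "{col A j}"] lin_indpt_singleton by auto
qed

lemma (in vec_space) rank_one_col_multiple:
  assumes A: "A \<in> carrier_mat n nc" and "rank A = 1"
    and w: "w \<in> set (cols A)" "w \<noteq> 0\<^sub>v n" and v: "v \<in> set (cols A)"
  obtains c where "v = c \<cdot>\<^sub>v w"
proof -
  have cols: "set (cols A) \<subseteq> carrier_vec n" using A by (auto simp: cols_def)
  have w_indpt: "lin_indpt {w}" using lin_indpt_singleton w cols by auto
  obtain S where S: "maximal S (\<lambda>T. T \<subseteq> set (cols A) \<and> lin_indpt T)" "{w} \<subseteq> S"
    using maximal_exists_superset[of "set (cols A)" "\<lambda>T. T \<subseteq> set (cols A) \<and> lin_indpt T" "{w}"]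
      w w_indpt by auto
  have "card S = 1" using rank_card_indpt[OF A S(1)] \<open>rank A = 1\<close> by simp
  then have S_eq: "S = {w}" using S(2) by (metis card_1_singletonE insert_subset singletonD)
  have S_max: "B = S" if "S \<subseteq> B" "B \<subseteq> set (cols A)" "lin_indpt B" for B
    using S(1) that unfolding maximal_def by blast
  show ?thesis
  proof (cases "v = w")
    case True
    then show ?thesis by (intro that[of 1]) simp
  next
    case False
    have "\<not> lin_indpt ({w} \<union> {v})"
    proof
      assume "lin_indpt ({w} \<union> {v})"
      then have "{w} \<union> {v} = S" by (rule S_max[rotated 2]) (use S_eq v w in auto)
      then show False using S_eq False by auto
    qed
    moreover have "{w} \<subseteq> carrier_vec n" "v \<in> carrier_vec n" "v \<notin> {w}" using w v cols False by auto
    ultimately have "v \<in> span {w}" using lin_dep_iff_in_span[of "{w}" v] w_indpt by simp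
    then obtain c where "lincomb c {w} = v" using finite_in_span[of "{w}"] w cols by auto
    then show ?thesis using that[of "c w"] w cols by (auto simp: lincomb_def)
  qed
qed

lemma (in vec_space) rank_one_imp_product_entries:
  assumes A: "A \<in> carrier_mat n nc" and rank: "rank A = 1"
  obtains f g where "\<And>i j. i < n \<Longrightarrow> j < nc \<Longrightarrow> A $$ (i, j) = f i * g j"
proof (cases "\<exists>i<n. \<exists>j<nc. A $$ (i, j) \<noteq> 0")
  case False
  then show ?thesis using that[of "\<lambda>_. 0" "\<lambda>_. 0"] by auto
next
  case True
  then obtain i0 j0 where "i0 < n" "j0 < nc" "A $$ (i0, j0) \<noteq> 0" by blast
  then have w: "col A j0 \<in> set (cols A)" "col A j0 \<noteq> 0\<^sub>v n"
    using A col_nonzero_if_entry_nonzero by (auto simp: cols_def)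
  have "\<exists>c. col A j = c \<cdot>\<^sub>v col A j0" if "j < nc" for j
    using rank_one_col_multiple[OF A rank w, of "col A j"] that A by (auto simp: cols_def)
  then obtain c where c: "\<And>j. j < nc \<Longrightarrow> col A j = c j \<cdot>\<^sub>v col A j0" by metis
  have "A $$ (i, j) = col A j0 $ i * c j" if "i < n" "j < nc" for i j
  proof -
    have "A $$ (i, j) = col A j $ i" using that A by simp
    also have "\<dots> = c j * col A j0 $ i" using c[OF that(2)] that A by simp
    finally show ?thesis by simp
  qed
  then show ?thesis by (rule that[of "\<lambda>i. col A j0 $ i" c])
qed

lemma is_linear_automorphismD:
  assumes "is_linear_automorphism K \<phi>"
  shows "additive \<phi>" "bij \<phi>" "\<And>c x. c \<in> K \<Longrightarrow> \<phi> (c * x) = c * \<phi> x"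
  using assms by (simp_all add: is_linear_automorphism_def additive_def)

lemma is_linear_code_line:
  fixes u :: "'a::field list"
  shows "is_linear_code (length u) (range (\<lambda>z. map ((*) z) u))"
  unfolding is_linear_code_def
proof (intro conjI ballI allI)
  show "replicate (length u) 0 \<in> range (\<lambda>z. map ((*) z) u)"
    by (rule range_eqI[where x=0]) (simp add: list_eq_iff_nth_eq)
next
  fix v v' assume "v \<in> range (\<lambda>z. map ((*) z) u)" "v' \<in> range (\<lambda>z. map ((*) z) u)"
  then obtain z z' where "v = map ((*) z) u" "v' = map ((*) z') u" by auto
  then show "map2 (+) v v' \<in> range (\<lambda>z. map ((*) z) u)"
    by (intro range_eqI[where x="z + z'"]) (simp add: list_eq_iff_nth_eq distrib_right)
next
  fix c v assume "v \<in> range (\<lambda>z. map ((*) z) u)"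
  then obtain z where "v = map ((*) z) u" by auto
  then show "map ((*) c) v \<in> range (\<lambda>z. map ((*) z) u)"
    by (intro range_eqI[where x="c * z"]) (simp add: mult.assoc)
qed auto

lemma additive_inj_imp_nonzero:
  assumes "additive \<phi>" "inj \<phi>" "x \<noteq> 0"
  shows "\<phi> x \<noteq> 0"
  using assms additive.zero by (metis injD)

lemma fully_linear_imp_scaled_multiplicative:
  fixes \<phi> :: "'a::field \<Rightarrow> 'a"
  assumes fl: "fully_linear \<phi>" and add: "additive \<phi>" and "inj \<phi>"
  shows "scaled_multiplicative \<phi>"
  unfolding scaled_multiplicative_def
proof (intro allI)
  fix x y :: 'a
  have one: "\<phi> 1 \<noteq> 0" using additive_inj_imp_nonzero[OF add \<open>inj \<phi>\<close>] by simp
  define C where "C = range (\<lambda>z. map ((*) z) [1, y])"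
  have "is_linear_code (length [1, y]) C" unfolding C_def by (rule is_linear_code_line)
  then have "is_linear_code 2 (map \<phi> ` C)" using fl by (simp add: fully_linear_def numeral_2_eq_2)
  moreover have "map \<phi> [1, y] \<in> map \<phi> ` C" unfolding C_def by (rule imageI, rule range_eqI[where x=1]) simp
  ultimately have "map ((*) (\<phi> x / \<phi> 1)) (map \<phi> [1, y]) \<in> map \<phi> ` C"
    unfolding is_linear_code_def by blast
  then obtain z where "\<phi> x = \<phi> z" "\<phi> x / \<phi> 1 * \<phi> y = \<phi> (z * y)"
    using one unfolding C_def by (auto simp: mult.commute)
  moreover from this(1) have "z = x" using \<open>inj \<phi>\<close> by (simp add: injD)
  ultimately show "\<phi> (x * y) * \<phi> 1 = \<phi> x * \<phi> y"
    using one by (simp add: field_simps)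
qed

lemma scaled_multiplicative_rescale:
  fixes \<phi> :: "'a::field \<Rightarrow> 'a"
  assumes sm: "scaled_multiplicative \<phi>" and "surj \<phi>" and one: "\<phi> 1 \<noteq> 0"
  obtains d where "\<And>x. \<phi> (d * x) = c * \<phi> x"
proof -
  obtain d where d: "\<phi> d = c * \<phi> 1" using \<open>surj \<phi>\<close> by (metis surjD)
  have "\<phi> (d * x) = c * \<phi> x" for x
  proof -
    have "\<phi> (d * x) * \<phi> 1 = \<phi> d * \<phi> x" using sm by (simp add: scaled_multiplicative_def)
    also have "\<dots> = (c * \<phi> x) * \<phi> 1" by (simp add: d ac_simps)
    finally show ?thesis using one by simp
  qed
  then show ?thesis by (rule that)
qed

lemma scaled_multiplicative_imp_fully_linear:
  fixes \<phi> :: "'a::field \<Rightarrow> 'a"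
  assumes sm: "scaled_multiplicative \<phi>" and add: "additive \<phi>" and "bij \<phi>"
  shows "fully_linear \<phi>"
  unfolding fully_linear_def
proof (intro allI impI)
  fix n :: nat and C :: "'a list set"
  assume code: "is_linear_code n C"
  have one: "\<phi> 1 \<noteq> 0" using additive_inj_imp_nonzero[OF add] \<open>bij \<phi>\<close> by (simp add: bij_is_inj)
  have map_add: "map2 (+) (map \<phi> u) (map \<phi> v) = map \<phi> (map2 (+) u v)" for u v
    by (simp add: zip_map1 zip_map2 additive.add[OF add] case_prod_beta)
  show "is_linear_code n (map \<phi> ` C)"
    unfolding is_linear_code_def
  proof (intro conjI ballI allI)
    show "map \<phi> ` C \<subseteq> {v. length v = n}" using code by (auto simp: is_linear_code_def)
    have "map \<phi> (replicate n 0) = replicate n 0" by (simp add: additive.zero[OF add])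
    then show "replicate n 0 \<in> map \<phi> ` C"
      using code unfolding is_linear_code_def by (metis image_eqI)
  next
    fix u v assume "u \<in> map \<phi> ` C" "v \<in> map \<phi> ` C"
    then obtain u' v' where "u' \<in> C" "v' \<in> C" "u = map \<phi> u'" "v = map \<phi> v'" by blast
    moreover have "map2 (+) u' v' \<in> C" using code \<open>u' \<in> C\<close> \<open>v' \<in> C\<close>
      unfolding is_linear_code_def by blast
    ultimately show "map2 (+) u v \<in> map \<phi> ` C" by (metis map_add image_eqI)
  next
    fix c v assume "v \<in> map \<phi> ` C"
    then obtain v' where "v' \<in> C" "v = map \<phi> v'" by blast
    moreover obtain d where "\<And>x. \<phi> (d * x) = c * \<phi> x"
      using scaled_multiplicative_rescale[OF sm bij_is_surj[OF \<open>bij \<phi>\<close>] one, of c] by blast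
    then have "map ((*) c) (map \<phi> v') = map \<phi> (map ((*) d) v')" by simp
    moreover have "map ((*) d) v' \<in> C" using code \<open>v' \<in> C\<close> unfolding is_linear_code_def by blast
    ultimately show "map ((*) c) v \<in> map \<phi> ` C" by (metis image_eqI)
  qed
qed

lemma fully_linear_iff_scaled_multiplicative:
  fixes \<phi> :: "'a::field \<Rightarrow> 'a"
  assumes "additive \<phi>" "bij \<phi>"
  shows "fully_linear \<phi> \<longleftrightarrow> scaled_multiplicative \<phi>"
  using assms fully_linear_imp_scaled_multiplicative scaled_multiplicative_imp_fully_linear
  by (blast dest: bij_is_inj)

lemma scaled_multiplicative_if_product_form:
  assumes "\<And>x y. \<phi> (x * y) = U x * W y"
  shows "scaled_multiplicative \<phi>"
  unfolding scaled_multiplicative_def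
proof (intro allI)
  fix x y
  have "\<phi> (x * y) * \<phi> 1 = (U x * W 1) * (U 1 * W y)" using assms[of x y] assms[of 1 1]
    by (simp add: algebra_simps)
  also have "\<dots> = \<phi> x * \<phi> y" using assms[of x 1] assms[of 1 y] by simp
  finally show "\<phi> (x * y) * \<phi> 1 = \<phi> x * \<phi> y" .
qed

lemma basis_vector_length_pos:
  assumes "is_basis_vector K m (a :: nat \<Rightarrow> 'a::field)"
  shows "m > 0"
proof -
  have "\<forall>x. \<exists>c. (\<forall>i<m. c i \<in> K) \<and> x = (\<Sum>i<m. c i * a i)"
    using assms unfolding is_basis_vector_def by (rule conjunct2)
  then obtain c where "(1::'a) = (\<Sum>i<m. c i * a i)" by blast
  then show ?thesis by (cases m) auto
qed

lemma basis_vector_nonzero: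
  fixes a :: "nat \<Rightarrow> 'a::field"
  assumes "is_subfield K" "is_basis_vector K m a" "i < m"
  shows "a i \<noteq> 0"
proof
  assume "a i = 0"
  have indep: "\<forall>c. (\<forall>i<m. c i \<in> K) \<and> (\<Sum>i<m. c i * a i) = 0 \<longrightarrow> (\<forall>i<m. c i = 0)"
    using assms(2) unfolding is_basis_vector_def by (rule conjunct1)
  let ?c = "\<lambda>j. if j = i then 1 else 0 :: 'a"
  have "\<forall>j<m. ?c j \<in> K" using assms(1) by (simp add: is_subfield_def)
  moreover have "(\<Sum>j<m. ?c j * a j) = 0" using \<open>a i = 0\<close> by (simp add: if_distrib cong: if_cong)
  ultimately have "\<forall>j<m. ?c j = 0" by (rule mp[OF spec[OF indep] conjI])
  then show False using assms(3) by (metis one_neq_zero)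
qed

lemma product_form_if_product_on_basis:
  assumes K: "is_subfield K" and a: "is_basis_vector K m a"
    and add: "additive \<phi>" and hom: "\<And>c x. c \<in> K \<Longrightarrow> \<phi> (c * x) = c * \<phi> x"
    and fg: "\<And>i j. i < m \<Longrightarrow> j < m \<Longrightarrow> \<phi> (a i * a j) = f i * g j"
  obtains U W where "\<And>x y. \<phi> (x * y) = U x * W y"
proof -
  obtain coord where coord: "\<And>x i. i < m \<Longrightarrow> coord x i \<in> K" "\<And>x. x = (\<Sum>i<m. coord x i * a i)"
    using a unfolding is_basis_vector_def by metis
  have coordK: "coord x i * coord y j \<in> K" if "i < m" "j < m" for x y i j
    using K coord(1) that by (simp add: is_subfield_def)
  have "\<phi> (x * y) = (\<Sum>i<m. coord x i * f i) * (\<Sum>j<m. coord y j * g j)" for x y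
  proof -
    have "x * y = (\<Sum>i<m. coord x i * a i) * (\<Sum>j<m. coord y j * a j)"
      by (simp only: coord(2)[symmetric])
    also have "\<dots> = (\<Sum>i<m. \<Sum>j<m. (coord x i * coord y j) * (a i * a j))"
      by (simp add: sum_product algebra_simps)
    finally have "\<phi> (x * y) = (\<Sum>i<m. \<Sum>j<m. (coord x i * coord y j) * \<phi> (a i * a j))"
      by (simp add: additive.sum[OF add] hom coordK)
    also have "\<dots> = (\<Sum>i<m. \<Sum>j<m. (coord x i * f i) * (coord y j * g j))"
      by (intro sum.cong refl) (simp add: fg algebra_simps)
    finally show ?thesis by (simp add: sum_product)
  qed
  then show ?thesis
    by (rule that[of "\<lambda>x. \<Sum>i<m. coord x i * f i" "\<lambda>y. \<Sum>j<m. coord y j * g j"])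
qed

lemma scaled_multiplicative_iff_rank_one:
  fixes K :: "'a::field set"
  assumes K: "is_subfield K" and a: "is_basis_vector K m a" and \<phi>: "is_linear_automorphism K \<phi>"
  defines "A \<equiv> mat m m (\<lambda>(i, j). \<phi> (a i * a j))"
  shows "scaled_multiplicative \<phi> \<longleftrightarrow> vec_space.rank m A = 1"
proof
  assume sm: "scaled_multiplicative \<phi>"
  have inj: "inj \<phi>" and add: "additive \<phi>"
    using is_linear_automorphismD[OF \<phi>] by (auto simp: bij_is_inj)
  have "vec_space.rank m A \<le> 1"
  proof (rule vec_space.rank_le_1_product_entries[of A m m "\<lambda>i. \<phi> (a i)" "\<lambda>j. \<phi> (a j) / \<phi> 1"])
    fix i j assume "i < dim_row A" "j < dim_col A"
    then show "A $$ (i, j) = \<phi> (a i) * (\<phi> (a j) / \<phi> 1)"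
      using sm additive_inj_imp_nonzero[OF add inj, of 1]
      by (simp add: A_def scaled_multiplicative_def eq_divide_eq)
  qed (simp add: A_def)
  moreover have "vec_space.rank m A \<ge> 1"
  proof (rule vec_space.rank_pos_if_nonzero_entry)
    have "m > 0" using basis_vector_length_pos[OF a] .
    then show "A $$ (0, 0) \<noteq> 0"
      using basis_vector_nonzero[OF K a] additive_inj_imp_nonzero[OF add inj] by (simp add: A_def)
  qed (use basis_vector_length_pos[OF a] in \<open>simp_all add: A_def\<close>)
  ultimately show "vec_space.rank m A = 1" by simp
next
  assume "vec_space.rank m A = 1"
  then obtain f g where "\<And>i j. i < m \<Longrightarrow> j < m \<Longrightarrow> A $$ (i, j) = f i * g j"
    using vec_space.rank_one_imp_product_entries[of A m m] by (auto simp: A_def)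
  then have "\<And>i j. i < m \<Longrightarrow> j < m \<Longrightarrow> \<phi> (a i * a j) = f i * g j" by (simp add: A_def)
  then obtain U W where "\<And>x y. \<phi> (x * y) = U x * W y"
    using product_form_if_product_on_basis[OF K a is_linear_automorphismD(1,3)[OF \<phi>]] by blast
  then show "scaled_multiplicative \<phi>" by (rule scaled_multiplicative_if_product_form)
qed

theorem mainTheorem2:
  fixes K :: "'a::{field, finite} set" and m :: nat and a :: "nat \<Rightarrow> 'a" and \<phi> :: "'a \<Rightarrow> 'a"
  assumes "is_subfield K"
    and "is_basis_vector K m a"
    and "is_linear_automorphism K \<phi>"
  shows "fully_linear \<phi> \<longleftrightarrow>
    vec_space.rank m (mat m m (\<lambda>(i, j). \<phi> (a i * a j)) :: 'a mat) = 1"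
proof -
  have "fully_linear \<phi> \<longleftrightarrow> scaled_multiplicative \<phi>"
    using fully_linear_iff_scaled_multiplicative is_linear_automorphismD(1,2)[OF assms(3)] .
  also have "\<dots> \<longleftrightarrow> vec_space.rank m (mat m m (\<lambda>(i, j). \<phi> (a i * a j)) :: 'a mat) = 1"
    using scaled_multiplicative_iff_rank_one[OF assms] .
  finally show ?thesis .
qed

end
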